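(* Let $T$ be a reduced linear trellis of length $n$. For each span $\mathfrak{s}$ choose a subset $\mathcal{B}_{\mathfrak{s}}\subseteq\mathbb{S}_{\mathfrak{s}}(T)$ whose image in the quotient $\mathbb{S}_{\mathfrak{s}}(T)/\mathbb{S}_{<\mathfrak{s}}(T)$ is a basis of that quotient (with distinct elements mapping to distinct basis elements). Then $\mathcal{B}:=\bigsqcup_{\mathfrak{s}}\mathcal{B}_{\mathfrak{s}}$ (union over all spans) is a basis of $\mathbb{S}(T)$, and for every span $\mathfrak{s}$ the set $\mathcal{B}\cap\mathbb{S}_{\mathfrak{s}}(T)$ spans $\mathbb{S}_{\mathfrak{s}}(T)$. In particular every reduced linear trellis has a product basis.
   Context: Let $\mathbb{F}$ be a finite field with $q$ elements and $n\ge1$; indices are taken in $\mathbb{Z}_n$. A trellis $T$ of length $n$ over $\mathbb{F}$ consists of pairwise disjoint finite vertex sets $V_i(T)$, $i\in\mathbb{Z}_n$, and edge sets $E_i(T)\subseteq V_i(T)\times\mathbb{F}\times V_{i+1}(T)$; $(v,\alpha,w)\in E_i(T)$ is an edge from $v$ to $w$ with label $\alpha$ at time index $i$. Every trellis is assumed trim: each vertex has at least one outgoing and one incoming edge. $T$ is linear if every $V_i(T)$ is an $\mathbb{F}$-vector space and every $E_i(T)$ is a subspace of $V_i(T)\times\mathbb{F}\times V_{i+1}(T)$. A path of length $m$ is a sequence $v_0\alpha_0v_1\alpha_1\cdots\alpha_{m-1}v_m$ such that each $(v_j,\alpha_j,v_{j+1})$ is an edge. A cycle is a path of length $n$ starting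 in $V_0(T)$ with $v_n=v_0$; it is identified with $(\mathbf{v},\boldsymbol{\alpha})\in\prod_{i\in\mathbb{Z}_n}V_i(T)\times\mathbb{F}^n$. The label code $\mathbb{S}(T)$ is the set of cycles (a linear subspace if $T$ is linear). $T$ is reduced if every edge lies on some cycle. Spans. For $a\in\mathbb{Z}_n$ and $0\le l\le n-1$ put $[a,a+l]=\{a,a+1,\dots,a+l\}\subseteq\mathbb{Z}_n$ and $(a,a+l]=[a,a+l]\setminus\{a\}$. Such a pair $(a,l)$ is a span of length $l$; there are also two degenerate spans, $\emptyset$ (length $-1$) and $\mathbb{Z}_n$ (length $n$). Partial order: $(a_1,l_1)\le(a_2,l_2)$ iff ($l_1\le l_2<n-1$ and $[a_1,a_1+l_1]\subseteq[a_2,a_2+l_2]$) or ($l_2=n-1$ and $(a_1,a_1+l_1]\subseteq(a_2,a_2+l_2]$) or $l_1=-1$ or $l_2=n$. A nondegenerate span $(a,l)$ is a span of the cycle $(\mathbf{v},\boldsymbol{\alpha})$ if $\{i:v_i\neq0\}\subseteq(a,a+l]$ and $\{i:\alpha_i\ne0\}\subseteq[a,a+l]$; $\emptyset$ is a span only of the zero cycle and $\mathbb{Z}_n$ is a span of every cycle. The span subcode $\mathbb{S}_{\mathfrak{s}}(T)$ is the subspace of cycles having span $\mathfrak{s}$, and $\mathbb{S}_{<\mathfrak{s}}(T):=\sum_{\mathfrak{s}'\lneq\mathfrak{s}}\mathbb{S}_{\mathfrak{s}'}(T)$. A product basis of $T$ is a basis $\mathcal{B}$ of $\mathbb{S}(T)$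 such that $\mathcal{B}\cap\mathbb{S}_{\mathfrak{s}}(T)$ spans $\mathbb{S}_{\mathfrak{s}}(T)$ for every span $\mathfrak{s}$. *)

theory Defs
  imports Complex_Main "HOL-Library.Function_Algebras" "HOL-Library.Product_Plus"
begin

text \<open>Time indices in Z_n are represented by 0..n-1; the successor of i is (i+1) mod n. Vertices of all time indices live in
  one ambient type 'v (values of V, E outside 0..n-1 are irrelevant).\<close>

definition tsucc :: "nat \<Rightarrow> nat \<Rightarrow> nat" where
  "tsucc n i = Suc i mod n"

definition tpred :: "nat \<Rightarrow> nat \<Rightarrow> nat" where
  "tpred n i = (i + n - 1) mod n"

definition trellis :: "nat \<Rightarrow> (nat \<Rightarrow> 'v set) \<Rightarrow> (nat \<Rightarrow> ('v \<times> 'f \<times> 'v) set) \<Rightarrow> bool" where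
  "trellis n V E \<longleftrightarrow> n \<ge> 1 \<and>
     (\<forall>i<n. finite (V i) \<and> E i \<subseteq> V i \<times> UNIV \<times> V (tsucc n i)) \<and>
     \<comment> \<open>trim: every vertex has an outgoing and an incoming edge\<close>
     (\<forall>i<n. \<forall>v\<in>V i. (\<exists>a w. (v, a, w) \<in> E i) \<and> (\<exists>u a. (u, a, v) \<in> E (tpred n i)))"

definition tscale :: "('f::field \<Rightarrow> 'v \<Rightarrow> 'v) \<Rightarrow> 'f \<Rightarrow> 'v \<times> 'f \<times> 'v \<Rightarrow> 'v \<times> 'f \<times> 'v" where
  "tscale scale c x = (case x of (v, a, w) \<Rightarrow> (scale c v, c * a, scale c w))"

definition linear_trellis ::
  "('f::field \<Rightarrow> 'v::ab_group_add \<Rightarrow> 'v) \<Rightarrow> nat \<Rightarrow> (nat \<Rightarrow> 'v set) \<Rightarrow> (nat \<Rightarrow> ('v \<times> 'f \<times> 'v) set) \<Rightarrow> bool" where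
  "linear_trellis scale n V E \<longleftrightarrow> trellis n V E \<and> vector_space scale \<and>
     (\<forall>i<n. module.subspace scale (V i) \<and> module.subspace (tscale scale) (E i))"

text \<open>Cycles: (v, alpha) with v_i in V_i, alpha_i in F, (v_i, alpha_i, v_(i+1 mod n)) in E_i;
  represented as functions on nat that vanish outside 0..n-1.\<close>
type_synonym ('v, 'f) cyc = "(nat \<Rightarrow> 'v) \<times> (nat \<Rightarrow> 'f)"

definition cycles :: "nat \<Rightarrow> (nat \<Rightarrow> ('v::zero \<times> 'f::zero \<times> 'v) set) \<Rightarrow> ('v, 'f) cyc set" where
  "cycles n E = {(v, a). (\<forall>i<n. (v i, a i, v (tsucc n i)) \<in> E i) \<and> (\<forall>i\<ge>n. v i = 0 \<and> a i = 0)}"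

text \<open>Scalar multiplication on pairs (v, alpha) (componentwise); the label code S(T) = cycles n E
  is a subspace of this vector space.\<close>
definition cscale :: "('f::field \<Rightarrow> 'v \<Rightarrow> 'v) \<Rightarrow> 'f \<Rightarrow> ('v, 'f) cyc \<Rightarrow> ('v, 'f) cyc" where
  "cscale scale c x = (case x of (v, a) \<Rightarrow> (\<lambda>i. scale c (v i), \<lambda>i. c * a i))"

definition reduced :: "nat \<Rightarrow> (nat \<Rightarrow> ('v::zero \<times> 'f::zero \<times> 'v) set) \<Rightarrow> bool" where
  "reduced n E \<longleftrightarrow> (\<forall>i<n. \<forall>v a w. (v, a, w) \<in> E i \<longrightarrow>
      (\<exists>c\<in>cycles n E. fst c i = v \<and> snd c i = a \<and> fst c (tsucc n i) = w))"

text \<open>SSpan a l is the span (a, l); SEmpty is the empty span (length -1), SFull is Z_n (length n).\<close>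
datatype spn = SEmpty | SFull | SSpan nat nat

definition valid_span :: "nat \<Rightarrow> spn \<Rightarrow> bool" where
  "valid_span n s = (case s of SSpan a l \<Rightarrow> a < n \<and> l \<le> n - 1 | _ \<Rightarrow> True)"

text \<open>[a, a+l] and (a, a+l] as subsets of Z_n.\<close>
definition cint :: "nat \<Rightarrow> nat \<Rightarrow> nat \<Rightarrow> nat set" where
  "cint n a l = {(a + j) mod n | j. j \<le> l}"

definition hint :: "nat \<Rightarrow> nat \<Rightarrow> nat \<Rightarrow> nat set" where
  "hint n a l = {(a + j) mod n | j. 1 \<le> j \<and> j \<le> l}"

fun span_le :: "nat \<Rightarrow> spn \<Rightarrow> spn \<Rightarrow> bool" where
  "span_le n SEmpty s2 = True"
| "span_le n s1 SFull = True"
| "span_le n (SSpan a1 l1) (SSpan a2 l2) =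
     ((l1 \<le> l2 \<and> l2 < n - 1 \<and> cint n a1 l1 \<subseteq> cint n a2 l2) \<or>
      (l2 = n - 1 \<and> hint n a1 l1 \<subseteq> hint n a2 l2))"
| "span_le n _ _ = False"

definition has_span :: "nat \<Rightarrow> spn \<Rightarrow> ('v::zero, 'f::zero) cyc \<Rightarrow> bool" where
  "has_span n s c = (case s of
       SEmpty \<Rightarrow> (\<forall>i<n. fst c i = 0 \<and> snd c i = 0)
     | SFull \<Rightarrow> True
     | SSpan a l \<Rightarrow> {i. i < n \<and> fst c i \<noteq> 0} \<subseteq> hint n a l \<and> {i. i < n \<and> snd c i \<noteq> 0} \<subseteq> cint n a l)"

definition span_subcode :: "nat \<Rightarrow> (nat \<Rightarrow> ('v::zero \<times> 'f::zero \<times> 'v) set) \<Rightarrow> spn \<Rightarrow> ('v, 'f) cyc set" where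
  "span_subcode n E s = {c \<in> cycles n E. has_span n s c}"

text \<open>S_{<s}(T): the sum of the subspaces S_s'(T) over spans s' strictly below s
  (a sum of subspaces is the span of their union).\<close>
definition below_subcode ::
  "('f::field \<Rightarrow> 'v::ab_group_add \<Rightarrow> 'v) \<Rightarrow> nat \<Rightarrow> (nat \<Rightarrow> ('v \<times> 'f \<times> 'v) set) \<Rightarrow> spn \<Rightarrow> ('v, 'f) cyc set" where
  "below_subcode scale n E s = module.span (cscale scale)
      (\<Union>{span_subcode n E s' | s'. valid_span n s' \<and> span_le n s' s \<and> s' \<noteq> s})"

text \<open>B \<subseteq> X and the image of B in the quotient X / W is a basis of X / W, with distinct
  elements of B having distinct images (i.e. the family (b + W)_{b \<in> B} is a basis).\<close>
definition quotient_basis :: "('f::field \<Rightarrow> 'b::ab_group_add \<Rightarrow> 'b) \<Rightarrow> 'b set \<Rightarrow> 'b set \<Rightarrow> 'b set \<Rightarrow> bool" where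
  "quotient_basis sc W X B \<longleftrightarrow> B \<subseteq> X \<and>
     (\<forall>t u. finite t \<and> t \<subseteq> B \<and> (\<Sum>b\<in>t. sc (u b) b) \<in> W \<longrightarrow> (\<forall>b\<in>t. u b = 0)) \<and>
     (\<forall>x\<in>X. \<exists>y\<in>module.span sc B. x - y \<in> W)"

definition is_basis :: "('f::field \<Rightarrow> 'b::ab_group_add \<Rightarrow> 'b) \<Rightarrow> 'b set \<Rightarrow> 'b set \<Rightarrow> bool" where
  "is_basis sc B X \<longleftrightarrow> module.independent sc B \<and> module.span sc B = X"

definition product_basis ::
  "('f::field \<Rightarrow> 'v::ab_group_add \<Rightarrow> 'v) \<Rightarrow> nat \<Rightarrow> (nat \<Rightarrow> ('v \<times> 'f \<times> 'v) set) \<Rightarrow> ('v, 'f) cyc set \<Rightarrow> bool" where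
  "product_basis scale n E B \<longleftrightarrow> is_basis (cscale scale) B (cycles n E) \<and>
     (\<forall>s. valid_span n s \<longrightarrow>
        module.span (cscale scale) (B \<inter> span_subcode n E s) = span_subcode n E s)"

end

theory Submission
  imports Defs
begin

text \<open>Write S_s for the span subcode of the span s and S_<s for the sum of the S_s' with
  s' < s. Everything rests on one property of the label code: a cycle x of span s that is a
  linear combination of cycles whose spans are not above s lies in S_<s. For s = (a, l) with
  l \<ge> 1, each of these cycles has a zero vertex at some time a + k with 1 \<le> k \<le> l; cutting
  each of them there and keeping the parts after the cuts gives a cycle R whose span starts
  later than a, while x - R has a span that ends earlier than a + l.

  Given this property, the chosen sets B_s are pairwise disjoint, their union spans every S_s
  by induction along the span order, and it is independent: in a vanishing combination, the
  terms from B_s with s of maximal length lie in S_s and in the sum of the S_s' with s' not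
  above s, hence in S_<s, so their coefficients vanish.\<close>

section \<open>Quotient bases of a ranked family of subspaces\<close>

lemma (in vector_space) quotient_basis_disjoint:
  assumes "quotient_basis scale W X B"
  shows "B \<inter> W = {}"
proof -
  have independent_mod_W:
    "\<And>t u. finite t \<Longrightarrow> t \<subseteq> B \<Longrightarrow> (\<Sum>b\<in>t. scale (u b) b) \<in> W \<Longrightarrow> \<forall>b\<in>t. u b = 0"
    using assms unfolding quotient_basis_def by blast
  show ?thesis using independent_mod_W[of "{b}" "\<lambda>_. 1" for b] by auto
qed

locale ranked_subspace_family = vector_space scale
  for scale :: "'f::field \<Rightarrow> 'b::ab_group_add \<Rightarrow> 'b" +
  fixes I :: "'i set" and le :: "'i \<Rightarrow> 'i \<Rightarrow> bool" and rank :: "'i \<Rightarrow> nat"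
    and S :: "'i \<Rightarrow> 'b set"
  assumes subspace_S: "i \<in> I \<Longrightarrow> subspace (S i)"
    and S_mono: "i \<in> I \<Longrightarrow> j \<in> I \<Longrightarrow> le i j \<Longrightarrow> S i \<subseteq> S j"
    and rank_less: "i \<in> I \<Longrightarrow> j \<in> I \<Longrightarrow> le i j \<Longrightarrow> i \<noteq> j \<Longrightarrow> rank i < rank j"
    and S_inter_not_above_subset_below: "i \<in> I \<Longrightarrow>
      S i \<inter> span (\<Union>{S j |j. j \<in> I \<and> \<not> le i j}) \<subseteq> span (\<Union>{S j |j. j \<in> I \<and> le j i \<and> j \<noteq> i})"
begin

abbreviation below :: "'i \<Rightarrow> 'b set" where
  "below i \<equiv> span (\<Union>{S j |j. j \<in> I \<and> le j i \<and> j \<noteq> i})"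

abbreviation not_above :: "'i \<Rightarrow> 'b set" where
  "not_above i \<equiv> span (\<Union>{S j |j. j \<in> I \<and> \<not> le i j})"

context
  fixes B :: "'i \<Rightarrow> 'b set"
  assumes quotient_basis_B: "\<And>i. i \<in> I \<Longrightarrow> quotient_basis scale (below i) (S i) (B i)"
begin

lemma B_subset: "i \<in> I \<Longrightarrow> B i \<subseteq> S i"
  using quotient_basis_B by (simp add: quotient_basis_def)

lemma B_disjoint_below: "i \<in> I \<Longrightarrow> B i \<inter> below i = {}"
  by (rule quotient_basis_disjoint) (rule quotient_basis_B)

lemma B_disjoint:
  assumes "i \<in> I" "j \<in> I" "i \<noteq> j"
  shows "B i \<inter> B j = {}"
proof (rule ccontr)
  assume "B i \<inter> B j \<noteq> {}"
  then obtain b where b: "b \<in> B i" "b \<in> B j" by blast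
  then have bS: "b \<in> S i" "b \<in> S j" using B_subset assms by auto
  show False
  proof (cases "le i j")
    case True
    then have "b \<in> below j" using bS assms by (intro span_base) blast
    then show False using B_disjoint_below[OF assms(2)] b(2) by blast
  next
    case False
    then have "b \<in> not_above i" using bS assms by (intro span_base) blast
    then have "b \<in> below i" using S_inter_not_above_subset_below[OF assms(1)] bS(1) by blast
    then show False using B_disjoint_below[OF assms(1)] b(1) by blast
  qed
qed

lemma S_subset_span_B: "i \<in> I \<Longrightarrow> S i \<subseteq> span (\<Union>(B ` I) \<inter> S i)"
proof (induction "rank i" arbitrary: i rule: less_induct)
  case less
  have below_subset: "below i \<subseteq> span (\<Union>(B ` I) \<inter> S i)"
  proof (rule span_minimal)
    show "\<Union>{S j |j. j \<in> I \<and> le j i \<and> j \<noteq> i} \<subseteq> span (\<Union>(B ` I) \<inter> S i)"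
    proof clarify
      fix j x assume j: "j \<in> I" "le j i" "j \<noteq> i" and "x \<in> S j"
      then have "x \<in> span (\<Union>(B ` I) \<inter> S j)" using less rank_less by blast
      also have "\<dots> \<subseteq> span (\<Union>(B ` I) \<inter> S i)"
        using S_mono[OF j(1) less.prems j(2)] by (intro span_mono) blast
      finally show "x \<in> span (\<Union>(B ` I) \<inter> S i)" .
    qed
  qed simp
  show ?case
  proof
    fix x assume "x \<in> S i"
    then obtain y where y: "y \<in> span (B i)" "x - y \<in> below i"
      using quotient_basis_B[OF less.prems] unfolding quotient_basis_def by blast
    have "B i \<subseteq> \<Union>(B ` I) \<inter> S i" using B_subset[OF less.prems] less.prems by blast
    then have "y \<in> span (\<Union>(B ` I) \<inter> S i)" using y(1) span_mono by blast
    then have "(x - y) + y \<in> span (\<Union>(B ` I) \<inter> S i)" using y(2) below_subset by (blast intro: span_add)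
    then show "x \<in> span (\<Union>(B ` I) \<inter> S i)" by simp
  qed
qed

lemma span_B_inter_S: "i \<in> I \<Longrightarrow> span (\<Union>(B ` I) \<inter> S i) = S i"
  by (intro antisym span_minimal S_subset_span_B subspace_S) auto

lemma independent_B: "independent (\<Union>(B ` I))"
proof
  assume "dependent (\<Union>(B ` I))"
  then obtain t u where t: "finite t" "t \<subseteq> \<Union>(B ` I)" "(\<Sum>v\<in>t. scale (u v) v) = 0"
    and nontrivial: "\<exists>v\<in>t. u v \<noteq> 0"
    unfolding dependent_explicit by blast
  obtain idx where idx: "\<And>v. v \<in> t \<Longrightarrow> idx v \<in> I \<and> v \<in> B (idx v)"
    using t(2) by (metis UN_E subsetD)
  define N where "N = {v \<in> t. u v \<noteq> 0}"
  have fin: "finite (rank ` idx ` N)" "rank ` idx ` N \<noteq> {}" using t(1) nontrivial by (auto simp: N_def)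
  obtain v0 where v0: "v0 \<in> N" "rank (idx v0) = Max (rank ` idx ` N)"
    using Max_in[OF fin] unfolding image_image by (metis imageE)
  define i where "i = idx v0"
  have i: "i \<in> I" "v0 \<in> B i" using idx v0(1) by (auto simp: i_def N_def)
  define A where "A = t \<inter> B i"
  have "(\<Sum>v\<in>t - A. scale (u v) v) \<in> not_above i"
  proof (intro span_sum)
    fix v assume v: "v \<in> t - A"
    show "scale (u v) v \<in> not_above i"
    proof (cases "u v = 0")
      case False
      then have "rank (idx v) \<le> rank i" using v fin(1) v0(2) by (auto simp: i_def N_def)
      moreover have "idx v \<noteq> i" using v idx by (auto simp: A_def)
      ultimately have "\<not> le i (idx v)" using rank_less[OF i(1), of "idx v"] idx[of v] v by auto
      then show ?thesis using idx[of v] v B_subset by (intro span_scale span_base) blast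
    qed (simp add: span_zero)
  qed
  moreover have "(\<Sum>v\<in>A. scale (u v) v) = - (\<Sum>v\<in>t - A. scale (u v) v)"
    using t(3) sum.subset_diff[of A t "\<lambda>v. scale (u v) v"] t(1)
    by (simp add: A_def eq_neg_iff_add_eq_0 add.commute)
  ultimately have "(\<Sum>v\<in>A. scale (u v) v) \<in> not_above i" by (simp add: span_neg)
  moreover have "(\<Sum>v\<in>A. scale (u v) v) \<in> S i"
    using B_subset[OF i(1)] subspace_S[OF i(1)] by (intro subspace_sum subspace_scale) (auto simp: A_def)
  ultimately have "(\<Sum>v\<in>A. scale (u v) v) \<in> below i" using S_inter_not_above_subset_below[OF i(1)] by blast
  then have "\<forall>v\<in>A. u v = 0"
    using quotient_basis_B[OF i(1)] t(1) unfolding quotient_basis_def A_def by blast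
  then show False using v0(1) i(2) by (auto simp: A_def N_def)
qed

end

end

section \<open>Cyclic intervals\<close>

definition offset :: "nat \<Rightarrow> nat \<Rightarrow> nat \<Rightarrow> nat" where
  "offset n a i = (i + n - a) mod n"

lemma offset_lt: "0 < n \<Longrightarrow> offset n a i < n"
  by (simp add: offset_def)

lemma offset_le: "0 < n \<Longrightarrow> offset n a i \<le> n - 1"
  using offset_lt[of n a i] by simp

lemma offset_add_mod: "a < n \<Longrightarrow> j < n \<Longrightarrow> offset n a ((a + j) mod n) = j"
proof (cases "a + j < n")
  case False
  assume "a < n" "j < n"
  then have "(a + j) mod n = a + j - n" using False by (simp add: mod_if)
  then show ?thesis using False \<open>a < n\<close> \<open>j < n\<close> by (simp add: offset_def)
qed (simp add: offset_def)

lemma add_offset_mod: "a < n \<Longrightarrow> i < n \<Longrightarrow> (a + offset n a i) mod n = i"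
proof (cases "a \<le> i")
  case True
  assume "a < n" "i < n"
  then have "offset n a i = i - a" using True by (simp add: offset_def mod_if)
  then show ?thesis using True \<open>i < n\<close> by simp
next
  case False
  assume "a < n" "i < n"
  then have "offset n a i = i + n - a" using False by (simp add: offset_def)
  then show ?thesis using False \<open>a < n\<close> by (simp add: mod_if)
qed

lemma offset_self: "offset n a a = 0"
  by (simp add: offset_def)

lemma offset_eq_0_iff: "a < n \<Longrightarrow> i < n \<Longrightarrow> offset n a i = 0 \<longleftrightarrow> i = a"
  using add_offset_mod[of a n i] by (auto simp: offset_self)

lemma offset_trans:
  assumes "a < n" "b < n"
  shows "offset n a i = (offset n a b + offset n b i) mod n"
proof -
  have "(b + n - a) + (i + n - b) = (i + n - a) + n" using assms by simp
  then have "((b + n - a) + (i + n - b)) mod n = (i + n - a) mod n" by simp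
  then show ?thesis unfolding offset_def by (simp add: mod_add_eq)
qed

lemma offset_add_mod_eq: "a < n \<Longrightarrow> b < n \<Longrightarrow> j < n \<Longrightarrow>
    offset n a ((b + j) mod n) = (offset n a b + j) mod n"
  using offset_trans[of a n b "(b + j) mod n"] offset_add_mod[of b n j] by simp

lemma offset_tsucc: "a < n \<Longrightarrow> i < n \<Longrightarrow> offset n a (tsucc n i) = (offset n a i + 1) mod n"
proof (cases "n = 1")
  case False
  assume "a < n" "i < n"
  then show ?thesis using False offset_add_mod_eq[of a n i 1] by (simp add: tsucc_def)
qed (simp add: offset_def tsucc_def)

lemma offset_shift:
  assumes "a < n" "i < n" "k \<le> offset n a i"
  shows "offset n ((a + k) mod n) i = offset n a i - k"
proof -
  have "i = (a + k + (offset n a i - k)) mod n" using add_offset_mod[OF assms(1,2)] assms(3) by simp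
  also have "\<dots> = ((a + k) mod n + (offset n a i - k)) mod n" by (simp add: mod_add_left_eq)
  finally show ?thesis
    using offset_add_mod[of "(a + k) mod n" n "offset n a i - k"] offset_lt[of n a i] assms by simp
qed

lemma mem_cint_iff: "a < n \<Longrightarrow> l < n \<Longrightarrow> i \<in> cint n a l \<longleftrightarrow> i < n \<and> offset n a i \<le> l"
  unfolding cint_def by (auto simp: offset_add_mod) (metis add_offset_mod)

lemma mem_hint_iff:
  "a < n \<Longrightarrow> l < n \<Longrightarrow> i \<in> hint n a l \<longleftrightarrow> i < n \<and> 1 \<le> offset n a i \<and> offset n a i \<le> l"
  unfolding hint_def by (auto simp: offset_add_mod) (metis add_offset_mod)

lemma no_wraparound:
  fixes D j0 m n L j :: nat
  assumes "D + j0 \<le> m" "m + 1 < n" "\<And>j. j0 \<le> j \<Longrightarrow> j \<le> L \<Longrightarrow> (D + j) mod n \<le> m"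
  shows "j0 \<le> j \<Longrightarrow> j \<le> L \<Longrightarrow> D + j \<le> m"
proof (induction j)
  case (Suc j)
  show ?case
  proof (cases "j0 = Suc j")
    case False
    then have "D + j \<le> m" using Suc by simp
    then have "D + Suc j < n" using assms(2) by simp
    then show ?thesis using assms(3)[of "Suc j"] Suc.prems by simp
  qed (use assms(1) in simp)
qed (use assms(1) in simp)

lemma cint_subset_iff:
  assumes "a < n" "a' < n" "l < n" "l' + 1 < n"
  shows "cint n a l \<subseteq> cint n a' l' \<longleftrightarrow> offset n a' a + l \<le> l'"
proof
  assume sub: "cint n a l \<subseteq> cint n a' l'"
  have "(offset n a' a + j) mod n \<le> l'" if "j \<le> l" for j
  proof -
    have "(a + j) mod n \<in> cint n a l"
      using that assms by (simp add: mem_cint_iff offset_add_mod)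
    then have "(a + j) mod n \<in> cint n a' l'" using sub by blast
    moreover have "offset n a' ((a + j) mod n) = (offset n a' a + j) mod n"
      using that assms by (intro offset_add_mod_eq) auto
    ultimately show ?thesis using assms by (simp add: mem_cint_iff)
  qed
  moreover from this[of 0] have "offset n a' a + 0 \<le> l'"
    using assms offset_lt[of n a' a] by simp
  ultimately show "offset n a' a + l \<le> l'"
    using no_wraparound[of "offset n a' a" 0 l' n l l] assms by simp
next
  assume le: "offset n a' a + l \<le> l'"
  show "cint n a l \<subseteq> cint n a' l'"
  proof
    fix i assume "i \<in> cint n a l"
    then have i: "i < n" "offset n a i \<le> l" using assms by (auto simp: mem_cint_iff)
    then have "offset n a' i = offset n a' a + offset n a i"
      using offset_trans[of a' n a i] le assms by simp
    then show "i \<in> cint n a' l'" using i le assms by (simp add: mem_cint_iff)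
  qed
qed

lemma hint_subset_iff:
  assumes "a < n" "a' < n" "1 \<le> l" "l < n" "l' + 1 < n"
  shows "hint n a l \<subseteq> hint n a' l' \<longleftrightarrow> offset n a' a + l \<le> l'"
proof
  assume sub: "hint n a l \<subseteq> hint n a' l'"
  have step: "1 \<le> (offset n a' a + j) mod n \<and> (offset n a' a + j) mod n \<le> l'"
    if "1 \<le> j" "j \<le> l" for j
  proof -
    have "(a + j) mod n \<in> hint n a l"
      using that assms by (simp add: mem_hint_iff offset_add_mod)
    then have "(a + j) mod n \<in> hint n a' l'" using sub by blast
    moreover have "offset n a' ((a + j) mod n) = (offset n a' a + j) mod n"
      using that assms by (intro offset_add_mod_eq) auto
    ultimately show ?thesis using assms by (simp add: mem_hint_iff)
  qed
  have "offset n a' a + 1 \<noteq> n" using step[of 1] assms by auto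
  then have "offset n a' a + 1 \<le> l'"
    using step[of 1] assms offset_lt[of n a' a] by simp
  then show "offset n a' a + l \<le> l'"
    using no_wraparound[of "offset n a' a" 1 l' n l l] step assms by simp
next
  assume le: "offset n a' a + l \<le> l'"
  show "hint n a l \<subseteq> hint n a' l'"
  proof
    fix i assume "i \<in> hint n a l"
    then have i: "i < n" "1 \<le> offset n a i" "offset n a i \<le> l" using assms by (auto simp: mem_hint_iff)
    then have "offset n a' i = offset n a' a + offset n a i"
      using offset_trans[of a' n a i] le assms by simp
    then show "i \<in> hint n a' l'" using i le assms by (simp add: mem_hint_iff)
  qed
qed

lemma hint_0: "hint n a 0 = {}"
  by (simp add: hint_def)

lemma cint_0: "cint n a 0 = {a mod n}"
  by (auto simp: cint_def)

lemma cint_full: "a < n \<Longrightarrow> cint n a (n - 1) = {..<n}"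
  using offset_le[of n a] by (auto simp: mem_cint_iff)

lemma hint_full: "a < n \<Longrightarrow> hint n a (n - 1) = {..<n} - {a}"
  using offset_le[of n a] offset_eq_0_iff[of a n] by (auto simp: mem_hint_iff Suc_le_eq offset_self)

lemma span_le_imp_subsets:
  assumes "valid_span n (SSpan a l)" "valid_span n (SSpan a' l')" "span_le n (SSpan a l) (SSpan a' l')"
  shows "hint n a l \<subseteq> hint n a' l' \<and> cint n a l \<subseteq> cint n a' l'"
proof -
  have v: "a < n" "a' < n" "l < n" "l' < n" using assms(1,2) by (auto simp: valid_span_def)
  consider "l' + 1 < n" "cint n a l \<subseteq> cint n a' l'" | "l' = n - 1" "hint n a l \<subseteq> hint n a' l'"
    using assms(3) by auto
  then show ?thesis
  proof cases
    case 1
    then have "offset n a' a + l \<le> l'" using v by (simp add: cint_subset_iff)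
    then have "hint n a l \<subseteq> hint n a' l'"
      using v 1 by (cases "l = 0") (simp_all add: hint_0 hint_subset_iff)
    with 1 show ?thesis by simp
  next
    case 2
    have "cint n a l \<subseteq> {..<n}" using v by (auto simp: cint_def)
    then show ?thesis using 2 v cint_full[of a' n] by simp
  qed
qed

lemma hint_subset_imp_span_le:
  assumes "valid_span n (SSpan a l)" "valid_span n (SSpan a' l')" "1 \<le> l"
    and "hint n a l \<subseteq> hint n a' l'"
  shows "span_le n (SSpan a l) (SSpan a' l')"
proof (cases "l' = n - 1")
  case False
  have v: "a < n" "a' < n" "l < n" "l' + 1 < n" using assms(1,2) False by (auto simp: valid_span_def)
  then have "offset n a' a + l \<le> l'" using assms(3,4) by (simp add: hint_subset_iff)
  then show ?thesis using v by (auto simp: cint_subset_iff)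
qed (use assms(4) in simp)

lemma has_span_mono:
  assumes "valid_span n s" "valid_span n s'" "span_le n s s'" "has_span n s c"
  shows "has_span n s' c"
proof (cases s')
  case (SSpan a' l')
  show ?thesis
  proof (cases s)
    case (SSpan a l)
    then have "hint n a l \<subseteq> hint n a' l' \<and> cint n a l \<subseteq> cint n a' l'"
      using assms \<open>s' = _\<close> by (intro span_le_imp_subsets) auto
    then show ?thesis using assms(4) \<open>s = _\<close> \<open>s' = _\<close> unfolding has_span_def by auto
  next
    case SEmpty
    then show ?thesis using assms(4) \<open>s' = _\<close> unfolding has_span_def by auto
  next
    case SFull
    then show ?thesis using assms(3) \<open>s' = _\<close> by simp
  qed
next
  case SEmpty
  then have "s = SEmpty" using assms(3) by (cases s) auto
  then show ?thesis using assms(4) \<open>s' = _\<close> by simp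
qed (simp add: has_span_def)

fun span_size :: "nat \<Rightarrow> spn \<Rightarrow> nat" where
  "span_size n SEmpty = 0"
| "span_size n (SSpan a l) = l + 1"
| "span_size n SFull = n + 1"

lemma span_size_less:
  assumes "valid_span n s" "valid_span n s'" "span_le n s s'" "s \<noteq> s'"
  shows "span_size n s < span_size n s'"
proof (cases s)
  case (SSpan a l)
  show ?thesis
  proof (cases s')
    case (SSpan a' l')
    have v: "a < n" "a' < n" "l < n" "l' < n"
      using assms \<open>s = _\<close> SSpan by (auto simp: valid_span_def)
    consider "l \<le> l'" "l' + 1 < n" "cint n a l \<subseteq> cint n a' l'"
      | "l' = n - 1" "hint n a l \<subseteq> hint n a' l'"
      using assms(3) \<open>s = _\<close> SSpan by auto
    then have "l < l' \<or> a = a'"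
    proof cases
      case 1
      then show ?thesis using v offset_eq_0_iff[of a' n a] by (auto simp: cint_subset_iff)
    next
      case 2
      show ?thesis
      proof (cases "l < l'")
        case False
        then have "l = n - 1" using 2 v by simp
        moreover have "a' \<notin> hint n a l" using 2 v hint_full[of a' n] by auto
        ultimately show ?thesis using v hint_full[of a n] by auto
      qed simp
    qed
    moreover have "l \<le> l'" using assms(3) \<open>s = _\<close> SSpan v by auto
    ultimately show ?thesis using assms(4) \<open>s = _\<close> SSpan by auto
  next
    case SEmpty
    then show ?thesis using assms(3) \<open>s = _\<close> by simp
  next
    case SFull
    then show ?thesis using assms(1) \<open>s = _\<close> by (auto simp: valid_span_def)
  qed
next
  case SEmpty
  then show ?thesis using assms(3,4) by (cases s') auto
next
  case SFull
  then show ?thesis using assms(3,4) by (cases s') auto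
qed

lemma not_span_le_imp_zero_vertex:
  assumes "valid_span n (SSpan a l)" "1 \<le> l" "valid_span n s"
    and "\<not> span_le n (SSpan a l) s" "has_span n s c"
  shows "\<exists>k. 1 \<le> k \<and> k \<le> l \<and> fst c ((a + k) mod n) = 0"
proof (rule ccontr)
  assume "\<not> ?thesis"
  then have nonzero: "fst c ((a + k) mod n) \<noteq> 0" if "1 \<le> k" "k \<le> l" for k
    using that by blast
  have v: "a < n" "l < n" using assms(1) by (auto simp: valid_span_def)
  show False
  proof (cases s)
    case SEmpty
    then show ?thesis using assms(5) nonzero[of 1] assms(2) v by (simp add: has_span_def)
  next
    case SFull
    then show ?thesis using assms(4) by simp
  next
    case (SSpan a' l')
    have "hint n a l \<subseteq> hint n a' l'"
    proof
      fix i assume "i \<in> hint n a l"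
      then obtain k where "i = (a + k) mod n" "1 \<le> k" "k \<le> l" by (auto simp: hint_def)
      then show "i \<in> hint n a' l'"
        using nonzero assms(5) SSpan v by (auto simp: has_span_def)
    qed
    then show ?thesis using hint_subset_imp_span_le assms SSpan by blast
  qed
qed

lemma not_span_le_imp_zero_label:
  assumes "a < n" "valid_span n s" "\<not> span_le n (SSpan a 0) s" "has_span n s c"
  shows "snd c a = 0"
proof (cases s)
  case SEmpty
  then show ?thesis using assms by (simp add: has_span_def)
next
  case SFull
  then show ?thesis using assms(3) by simp
next
  case (SSpan a' l')
  then have "a \<notin> cint n a' l'" using assms(1-3) by (auto simp: hint_0 cint_0 valid_span_def)
  then show ?thesis using assms(1,4) SSpan by (auto simp: has_span_def)
qed

lemma span_le_subspan:
  assumes "a < n" "l < n" "k + m \<le> l"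
  shows "span_le n (SSpan ((a + k) mod n) m) (SSpan a l)"
proof -
  have shift: "(((a + k) mod n) + j) mod n = (a + (k + j)) mod n" for j
    by (simp add: mod_add_left_eq add.assoc)
  have "hint n ((a + k) mod n) m \<subseteq> hint n a l"
  proof
    fix i assume "i \<in> hint n ((a + k) mod n) m"
    then obtain j where "i = (a + (k + j)) mod n" "1 \<le> j" "j \<le> m" by (auto simp: hint_def shift)
    then show "i \<in> hint n a l" using assms(3) unfolding hint_def by force
  qed
  moreover have "cint n ((a + k) mod n) m \<subseteq> cint n a l"
  proof
    fix i assume "i \<in> cint n ((a + k) mod n) m"
    then obtain j where "i = (a + (k + j)) mod n" "j \<le> m" by (auto simp: cint_def shift)
    then show "i \<in> cint n a l" using assms(3) unfolding cint_def by force
  qed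
  ultimately show ?thesis using assms by (cases "l = n - 1") auto
qed

section \<open>The label code of a linear trellis\<close>

lemma sum_apply: "(sum f A) i = (\<Sum>x\<in>A. f x i)"
  by (induction A rule: infinite_finite_induct) auto

lemma fst_cscale [simp]: "fst (cscale scale u c) = (\<lambda>i. scale u (fst c i))"
  by (cases c) (simp add: cscale_def)

lemma snd_cscale [simp]: "snd (cscale scale u c) = (\<lambda>i. u * snd c i)"
  by (cases c) (simp add: cscale_def)

lemma vector_space_tscale: "vector_space scale \<Longrightarrow> vector_space (tscale scale)"
  unfolding vector_space_def tscale_def
  by (auto simp: algebra_simps split: prod.splits)

lemma vector_space_cscale: "vector_space scale \<Longrightarrow> vector_space (cscale scale)"
  unfolding vector_space_def cscale_def
  by (auto simp: algebra_simps fun_eq_iff split: prod.splits)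

locale trellis_code = vector_space scale
  for scale :: "'f::field \<Rightarrow> 'v::ab_group_add \<Rightarrow> 'v" +
  fixes n :: nat and E :: "nat \<Rightarrow> ('v \<times> 'f \<times> 'v) set"
  assumes n_pos: "0 < n"
    and subspace_E: "i < n \<Longrightarrow> module.subspace (tscale scale) (E i)"
begin

sublocale T: vector_space "tscale scale"
  by (rule vector_space_tscale) unfold_locales

sublocale C: vector_space "cscale scale"
  by (rule vector_space_cscale) unfold_locales

lemma edge_zero: "i < n \<Longrightarrow> 0 \<in> E i"
  using T.subspace_0[OF subspace_E] .

lemma edge_sum: "i < n \<Longrightarrow> (\<And>c. c \<in> A \<Longrightarrow> f c \<in> E i) \<Longrightarrow> sum f A \<in> E i"
  using T.subspace_sum[OF subspace_E] .

lemma edge_of_cycle: "c \<in> cycles n E \<Longrightarrow> i < n \<Longrightarrow> (fst c i, snd c i, fst c (tsucc n i)) \<in> E i"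
  by (auto simp: cycles_def)

lemma cycle_vanishes: "c \<in> cycles n E \<Longrightarrow> n \<le> i \<Longrightarrow> fst c i = 0 \<and> snd c i = 0"
  by (auto simp: cycles_def)

lemma cyclesI:
  "(\<And>i. i < n \<Longrightarrow> (fst c i, snd c i, fst c (tsucc n i)) \<in> E i) \<Longrightarrow>
   (\<And>i. n \<le> i \<Longrightarrow> fst c i = 0 \<and> snd c i = 0) \<Longrightarrow> c \<in> cycles n E"
  by (cases c) (auto simp: cycles_def)

lemma cycle_eq_0I:
  assumes "c \<in> cycles n E" "\<And>i. i < n \<Longrightarrow> fst c i = 0 \<and> snd c i = 0"
  shows "c = 0"
proof -
  have "fst c i = 0 \<and> snd c i = 0" for i
    using assms cycle_vanishes[of c i] by (cases "i < n") auto
  then show ?thesis by (simp add: prod_eq_iff fun_eq_iff)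
qed

lemma subspace_cycles: "C.subspace (cycles n E)"
proof (rule C.subspaceI)
  show "0 \<in> cycles n E"
    using edge_zero by (intro cyclesI) (auto simp: zero_prod_def)
next
  fix c d assume cd: "c \<in> cycles n E" "d \<in> cycles n E"
  show "c + d \<in> cycles n E"
  proof (rule cyclesI)
    fix i assume i: "i < n"
    show "(fst (c + d) i, snd (c + d) i, fst (c + d) (tsucc n i)) \<in> E i"
      using T.subspace_add[OF subspace_E[OF i] edge_of_cycle[OF cd(1) i] edge_of_cycle[OF cd(2) i]]
      by simp
  qed (use cd cycle_vanishes in auto)
next
  fix u c assume c: "c \<in> cycles n E"
  show "cscale scale u c \<in> cycles n E"
  proof (rule cyclesI)
    fix i assume i: "i < n"
    show "(fst (cscale scale u c) i, snd (cscale scale u c) i, fst (cscale scale u c) (tsucc n i)) \<in> E i"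
      using T.subspace_scale[OF subspace_E[OF i] edge_of_cycle[OF c i], of u]
      by (cases c) (simp add: cscale_def tscale_def)
  qed (use c cycle_vanishes in \<open>auto simp: cscale_def split: prod.splits\<close>)
qed

lemma subspace_span_subcode: "C.subspace (span_subcode n E s)"
proof (rule C.subspaceI)
  show "0 \<in> span_subcode n E s"
    using C.subspace_0[OF subspace_cycles] by (cases s) (auto simp: span_subcode_def has_span_def)
next
  fix c d assume "c \<in> span_subcode n E s" "d \<in> span_subcode n E s"
  then show "c + d \<in> span_subcode n E s" using C.subspace_add[OF subspace_cycles]
    by (cases s) (auto simp: span_subcode_def has_span_def subset_iff)
next
  fix u c assume "c \<in> span_subcode n E s"
  then show "cscale scale u c \<in> span_subcode n E s" using C.subspace_scale[OF subspace_cycles]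
    by (cases s) (auto simp: span_subcode_def has_span_def subset_iff cscale_def split: prod.splits)
qed

lemma span_subcode_mono:
  "valid_span n s \<Longrightarrow> valid_span n s' \<Longrightarrow> span_le n s s' \<Longrightarrow> span_subcode n E s \<subseteq> span_subcode n E s'"
  using has_span_mono by (auto simp: span_subcode_def)

subsection \<open>Cutting cycles at zero vertices\<close>

context
  fixes a l :: nat and t :: "'a set" and z :: "'a \<Rightarrow> ('v, 'f) cyc" and k :: "'a \<Rightarrow> nat"
    and x :: "('v, 'f) cyc"
  assumes a: "a < n" and l: "1 \<le> l" "l < n" and t: "finite t" "t \<noteq> {}"
    and z_cycle: "\<And>c. c \<in> t \<Longrightarrow> z c \<in> cycles n E"
    and k: "\<And>c. c \<in> t \<Longrightarrow> 1 \<le> k c \<and> k c \<le> l"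
    and z_cut: "\<And>c. c \<in> t \<Longrightarrow> fst (z c) ((a + k c) mod n) = 0"
    and x_sum: "x = (\<Sum>c\<in>t. z c)"
    and x_span: "x \<in> span_subcode n E (SSpan a l)"
begin

text \<open>Each z c is cut at its zero vertex a + k c, and tail_sum adds up the parts of the z c between
  the cut and the end a + l of the span of x. It is a cycle because its edge at time a + l is
  the edge of x there.\<close>

definition tail_sum :: "('v, 'f) cyc" where
  "tail_sum =
    (\<lambda>i. if i < n \<and> offset n a i \<le> l then \<Sum>c\<in>{c\<in>t. k c < offset n a i}. fst (z c) i else 0,
     \<lambda>i. if i < n \<and> offset n a i \<le> l then \<Sum>c\<in>{c\<in>t. k c \<le> offset n a i}. snd (z c) i else 0)"

lemma fst_tail_sum:
  "fst tail_sum i = (if i < n \<and> offset n a i \<le> l then \<Sum>c\<in>{c\<in>t. k c \<le> offset n a i}. fst (z c) i else 0)"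
proof -
  have "(\<Sum>c\<in>{c\<in>t. k c < offset n a i}. fst (z c) i) = (\<Sum>c\<in>{c\<in>t. k c \<le> offset n a i}. fst (z c) i)"
    if "i < n"
  proof (rule sum.mono_neutral_left)
    show "\<forall>c\<in>{c\<in>t. k c \<le> offset n a i} - {c\<in>t. k c < offset n a i}. fst (z c) i = 0"
    proof
      fix c assume "c \<in> {c\<in>t. k c \<le> offset n a i} - {c\<in>t. k c < offset n a i}"
      then have "c \<in> t" "k c = offset n a i" by auto
      then show "fst (z c) i = 0" using z_cut add_offset_mod[OF a that] by metis
    qed
  qed (use t in auto)
  then show ?thesis by (simp add: tail_sum_def)
qed

lemma snd_tail_sum:
  "snd tail_sum i = (if i < n \<and> offset n a i \<le> l then \<Sum>c\<in>{c\<in>t. k c \<le> offset n a i}. snd (z c) i else 0)"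
  by (simp add: tail_sum_def)

lemma tail_sum_vertex_outside: "offset n a i = 0 \<or> l < offset n a i \<Longrightarrow> fst tail_sum i = 0"
  using k by (auto simp: tail_sum_def intro!: sum.neutral)

lemma x_cycle: "x \<in> cycles n E"
  using x_span by (simp add: span_subcode_def)

lemma x_vertex: "fst x i = (\<Sum>c\<in>t. fst (z c) i)"
  by (simp add: x_sum fst_sum sum_apply)

lemma x_label: "snd x i = (\<Sum>c\<in>t. snd (z c) i)"
  by (simp add: x_sum snd_sum sum_apply)

lemma x_vertex_outside: "i < n \<Longrightarrow> offset n a i = 0 \<or> l < offset n a i \<Longrightarrow> fst x i = 0"
  using x_span l a by (auto simp: span_subcode_def has_span_def mem_hint_iff)

lemma x_label_outside: "i < n \<Longrightarrow> l < offset n a i \<Longrightarrow> snd x i = 0"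
  using x_span l a by (auto simp: span_subcode_def has_span_def mem_cint_iff)

lemma tail_sum_eq_x:
  assumes "i < n" "Max (k ` t) \<le> offset n a i" "offset n a i \<le> l"
  shows "fst tail_sum i = fst x i \<and> snd tail_sum i = snd x i"
proof -
  have "{c\<in>t. k c \<le> offset n a i} = t" using assms(2) t(1) by (auto intro: order.trans[OF Max_ge])
  then show ?thesis using assms(1,3) by (simp add: fst_tail_sum snd_tail_sum x_vertex x_label)
qed

lemma tail_sum_cycle: "tail_sum \<in> cycles n E"
proof (rule cyclesI)
  fix i assume i: "i < n"
  have succ: "tsucc n i < n" "offset n a (tsucc n i) = (offset n a i + 1) mod n"
    using n_pos offset_tsucc[OF a i] by (simp_all add: tsucc_def)
  consider "offset n a i < l" | "offset n a i = l" | "l < offset n a i" by linarith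
  then show "(fst tail_sum i, snd tail_sum i, fst tail_sum (tsucc n i)) \<in> E i"
  proof cases
    case 1
    let ?t = "{c\<in>t. k c \<le> offset n a i}"
    have "offset n a (tsucc n i) = offset n a i + 1" using succ 1 l by simp
    then have "fst tail_sum (tsucc n i) = (\<Sum>c\<in>?t. fst (z c) (tsucc n i))"
      using 1 succ by (simp add: tail_sum_def less_Suc_eq_le)
    moreover have "fst tail_sum i = (\<Sum>c\<in>?t. fst (z c) i)" "snd tail_sum i = (\<Sum>c\<in>?t. snd (z c) i)"
      using 1 i by (simp_all add: fst_tail_sum snd_tail_sum)
    ultimately have "(fst tail_sum i, snd tail_sum i, fst tail_sum (tsucc n i)) =
        (\<Sum>c\<in>?t. (fst (z c) i, snd (z c) i, fst (z c) (tsucc n i)))"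
      by (simp add: prod_eq_iff fst_sum snd_sum)
    also have "\<dots> \<in> E i" using edge_of_cycle[OF z_cycle i] by (intro edge_sum[OF i]) auto
    finally show ?thesis .
  next
    case 2
    have "offset n a (tsucc n i) = 0 \<or> l < offset n a (tsucc n i)"
      using succ 2 l by (cases "l + 1 = n") auto
    then have "fst tail_sum (tsucc n i) = 0 \<and> fst x (tsucc n i) = 0"
      using succ x_vertex_outside tail_sum_vertex_outside by blast
    moreover have "Max (k ` t) \<le> l" using k t by auto
    ultimately show ?thesis using tail_sum_eq_x[OF i] 2 edge_of_cycle[OF x_cycle i] by simp
  next
    case 3
    have "offset n a (tsucc n i) = 0 \<or> l < offset n a (tsucc n i)"
      using succ 3 offset_lt[OF n_pos, of a i] by (cases "offset n a i + 1 = n") auto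
    then have "fst tail_sum (tsucc n i) = 0" by (rule tail_sum_vertex_outside)
    then show ?thesis using 3 edge_zero[OF i] by (simp add: fst_tail_sum snd_tail_sum zero_prod_def)
  qed
qed (simp add: tail_sum_def)

lemma diff_tail_sum_span: "x - tail_sum \<in> span_subcode n E (SSpan a (Max (k ` t) - 1))"
proof -
  let ?K = "Max (k ` t)"
  have K: "1 \<le> ?K" "?K \<le> l" using k t by (auto simp: Max_ge_iff)
  have agree_vertex: "fst tail_sum i = fst x i" if "i < n" "offset n a i = 0 \<or> ?K \<le> offset n a i" for i
  proof (cases "offset n a i = 0 \<or> l < offset n a i")
    case True
    then show ?thesis using that x_vertex_outside tail_sum_vertex_outside by auto
  qed (use that tail_sum_eq_x in auto)
  have agree_label: "snd tail_sum i = snd x i" if "i < n" "?K \<le> offset n a i" for i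
  proof (cases "l < offset n a i")
    case True
    then show ?thesis using that x_label_outside by (auto simp: snd_tail_sum)
  qed (use that tail_sum_eq_x in auto)
  have "i \<in> hint n a (?K - 1)" if "i < n" "fst (x - tail_sum) i \<noteq> 0" for i
    using agree_vertex[of i] that a K l
    by (cases "offset n a i = 0 \<or> ?K \<le> offset n a i") (auto simp: mem_hint_iff)
  moreover have "i \<in> cint n a (?K - 1)" if "i < n" "snd (x - tail_sum) i \<noteq> 0" for i
    using agree_label[of i] that a K l by (cases "?K \<le> offset n a i") (auto simp: mem_cint_iff)
  ultimately show ?thesis
    using C.subspace_diff[OF subspace_cycles x_cycle tail_sum_cycle]
    by (auto simp: span_subcode_def has_span_def)
qed

lemma tail_sum_span:
  "tail_sum \<in> span_subcode n E (SSpan ((a + Min (k ` t)) mod n) (l - Min (k ` t)))"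
proof -
  let ?\<kappa> = "Min (k ` t)" and ?a = "(a + Min (k ` t)) mod n"
  have a': "?a < n" using n_pos by simp
  have offset': "offset n ?a i = offset n a i - ?\<kappa>" if "i < n" "?\<kappa> \<le> offset n a i" for i
    using offset_shift[OF a that] .
  have "i \<in> hint n ?a (l - ?\<kappa>)" if "i < n" "fst tail_sum i \<noteq> 0" for i
  proof -
    have "offset n a i \<le> l" "(\<Sum>c\<in>{c\<in>t. k c < offset n a i}. fst (z c) i) \<noteq> 0"
      using that by (auto simp: tail_sum_def split: if_splits)
    then obtain c where "c \<in> t" "k c < offset n a i" by (metis (mono_tags, lifting) mem_Collect_eq sum.neutral)
    then have "?\<kappa> < offset n a i" using t(1) by (meson Min_le finite_imageI image_eqI le_less_trans)
    then show ?thesis using that offset' a' l \<open>offset n a i \<le> l\<close> by (simp add: mem_hint_iff, linarith)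
  qed
  moreover have "i \<in> cint n ?a (l - ?\<kappa>)" if "i < n" "snd tail_sum i \<noteq> 0" for i
  proof -
    have "offset n a i \<le> l" "(\<Sum>c\<in>{c\<in>t. k c \<le> offset n a i}. snd (z c) i) \<noteq> 0"
      using that by (auto simp: tail_sum_def split: if_splits)
    then obtain c where "c \<in> t" "k c \<le> offset n a i" by (metis (mono_tags, lifting) mem_Collect_eq sum.neutral)
    then have "?\<kappa> \<le> offset n a i" using t(1) by (meson Min_le finite_imageI image_eqI order.trans)
    then have "offset n ?a i \<le> l - ?\<kappa>" using offset' that \<open>offset n a i \<le> l\<close> by simp
    then show ?thesis using mem_cint_iff[OF a', of "l - ?\<kappa>" i] that l by simp
  qed
  ultimately show ?thesis using tail_sum_cycle by (auto simp: span_subcode_def has_span_def)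
qed

lemma cut_sum_in_below_subcode: "x \<in> below_subcode scale n E (SSpan a l)"
proof -
  let ?K = "Max (k ` t)" and ?\<kappa> = "Min (k ` t)"
  have K: "1 \<le> ?K" "?K \<le> l" using k t by (auto simp: Max_ge_iff)
  have \<kappa>: "1 \<le> ?\<kappa>" "?\<kappa> \<le> l" using k t by (auto simp: Min_le_iff)
  let ?U = "\<Union>{span_subcode n E s' |s'. valid_span n s' \<and> span_le n s' (SSpan a l) \<and> s' \<noteq> SSpan a l}"
  have "span_le n (SSpan ((a + 0) mod n) (?K - 1)) (SSpan a l)"
    using a l K by (intro span_le_subspan) auto
  then have "span_le n (SSpan a (?K - 1)) (SSpan a l)" using a by (simp del: span_le.simps)
  moreover have "valid_span n (SSpan a (?K - 1))" "SSpan a (?K - 1) \<noteq> SSpan a l"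
    using a l K by (auto simp: valid_span_def)
  ultimately have "x - tail_sum \<in> ?U" using diff_tail_sum_span by blast
  moreover have "span_le n (SSpan ((a + ?\<kappa>) mod n) (l - ?\<kappa>)) (SSpan a l)"
    using a l \<kappa> by (intro span_le_subspan) auto
  moreover have "valid_span n (SSpan ((a + ?\<kappa>) mod n) (l - ?\<kappa>))"
    "SSpan ((a + ?\<kappa>) mod n) (l - ?\<kappa>) \<noteq> SSpan a l"
    using n_pos l \<kappa> by (auto simp: valid_span_def)
  ultimately have "tail_sum \<in> ?U" "x - tail_sum \<in> ?U" using tail_sum_span by blast+
  then have "(x - tail_sum) + tail_sum \<in> C.span ?U" by (intro C.span_add C.span_base)
  then show ?thesis by (simp add: below_subcode_def)
qed

end

lemma not_above_label_zero:
  assumes a: "a < n"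
    and x: "x \<in> C.span (\<Union>{span_subcode n E s' |s'. valid_span n s' \<and> \<not> span_le n (SSpan a 0) s'})"
  shows "snd x a = 0"
proof -
  have "C.subspace {c. snd c a = 0}"
    by (rule C.subspaceI) (auto simp: zero_prod_def)
  moreover have "\<Union>{span_subcode n E s' |s'. valid_span n s' \<and> \<not> span_le n (SSpan a 0) s'} \<subseteq> {c. snd c a = 0}"
    using not_span_le_imp_zero_label[OF a] by (auto simp: span_subcode_def)
  ultimately show ?thesis using C.span_minimal x by blast
qed

lemma cycle_in_below_subcode_SSpan:
  assumes a: "a < n" and l: "1 \<le> l" "l < n" and x: "x \<in> span_subcode n E (SSpan a l)"
    and x_span: "x \<in> C.span (\<Union>{span_subcode n E s' |s'. valid_span n s' \<and> \<not> span_le n (SSpan a l) s'})"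
  shows "x \<in> below_subcode scale n E (SSpan a l)"
proof -
  obtain t u where t: "finite t"
    "t \<subseteq> \<Union>{span_subcode n E s' |s'. valid_span n s' \<and> \<not> span_le n (SSpan a l) s'}"
    and x_sum: "x = (\<Sum>c\<in>t. cscale scale (u c) c)"
    using x_span unfolding C.span_explicit by blast
  have generator: "\<exists>s'. valid_span n s' \<and> \<not> span_le n (SSpan a l) s' \<and> c \<in> span_subcode n E s'"
    if "c \<in> t" for c
    using t(2) that by blast
  have cut: "\<exists>k. 1 \<le> k \<and> k \<le> l \<and> fst c ((a + k) mod n) = 0" if c: "c \<in> t" for c
  proof -
    obtain s' where "valid_span n s'" "\<not> span_le n (SSpan a l) s'" "has_span n s' c"
      using generator[OF c] by (auto simp: span_subcode_def)
    moreover have "valid_span n (SSpan a l)" using a l by (simp add: valid_span_def)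
    ultimately show ?thesis using not_span_le_imp_zero_vertex l(1) by blast
  qed
  then obtain k where k: "\<And>c. c \<in> t \<Longrightarrow> 1 \<le> k c \<and> k c \<le> l \<and> fst c ((a + k c) mod n) = 0"
    by metis
  show ?thesis
  proof (cases "t = {}")
    case True
    then show ?thesis using x_sum by (simp add: below_subcode_def C.span_zero)
  next
    case False
    show ?thesis
    proof (rule cut_sum_in_below_subcode[where k = k, OF a l t(1) False _ _ _ x_sum x])
      show "cscale scale (u c) c \<in> cycles n E" if "c \<in> t" for c
      proof -
        have "c \<in> cycles n E" using generator[OF that] by (auto simp: span_subcode_def)
        then show ?thesis by (rule C.subspace_scale[OF subspace_cycles])
      qed
    qed (use k in auto)
  qed
qed

lemma span_subcode_inter_not_above_subset_below:
  assumes s: "valid_span n s"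
  shows "span_subcode n E s \<inter> C.span (\<Union>{span_subcode n E s' |s'. valid_span n s' \<and> \<not> span_le n s s'})
    \<subseteq> below_subcode scale n E s"
proof clarify
  fix x
  assume x: "x \<in> span_subcode n E s"
    and x_span: "x \<in> C.span (\<Union>{span_subcode n E s' |s'. valid_span n s' \<and> \<not> span_le n s s'})"
  show "x \<in> below_subcode scale n E s"
  proof (cases s)
    case SEmpty
    then have "x = 0" using x by (intro cycle_eq_0I) (auto simp: span_subcode_def has_span_def)
    then show ?thesis by (simp add: below_subcode_def C.span_zero)
  next
    case SFull
    have "span_le n s' SFull" for s' by (cases s') auto
    moreover have "span_le n SFull s' \<Longrightarrow> s' = SFull" for s' by (cases s') auto
    ultimately have "\<Union>{span_subcode n E s' |s'. valid_span n s' \<and> \<not> span_le n s s'} \<subseteq>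
        \<Union>{span_subcode n E s' |s'. valid_span n s' \<and> span_le n s' s \<and> s' \<noteq> s}"
      using SFull by blast
    then show ?thesis using x_span C.span_mono unfolding below_subcode_def by blast
  next
    case (SSpan a l)
    have a: "a < n" and l: "l < n" using s SSpan n_pos by (auto simp: valid_span_def)
    show ?thesis
    proof (cases "l = 0")
      case True
      have "x = 0"
      proof (rule cycle_eq_0I)
        show "x \<in> cycles n E" using x by (simp add: span_subcode_def)
        have "snd x a = 0" using not_above_label_zero[OF a] x_span SSpan True by simp
        then show "fst x i = 0 \<and> snd x i = 0" if "i < n" for i
          using x SSpan True that a by (auto simp: span_subcode_def has_span_def hint_0 cint_0)
      qed
      then show ?thesis by (simp add: below_subcode_def C.span_zero)
    next
      case False
      then show ?thesis using cycle_in_below_subcode_SSpan[OF a _ l] x x_span SSpan by simp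
    qed
  qed
qed

sublocale spans: ranked_subspace_family "cscale scale" "{s. valid_span n s}" "span_le n" "span_size n"
  "span_subcode n E"
proof
  fix s assume "s \<in> {s. valid_span n s}"
  then show "span_subcode n E s \<inter> C.span (\<Union>{span_subcode n E s' |s'. s' \<in> {s. valid_span n s} \<and> \<not> span_le n s s'})
      \<subseteq> C.span (\<Union>{span_subcode n E s' |s'. s' \<in> {s. valid_span n s} \<and> span_le n s' s \<and> s' \<noteq> s})"
    using span_subcode_inter_not_above_subset_below[of s] by (simp add: below_subcode_def)
qed (auto simp: subspace_span_subcode span_subcode_mono span_size_less)

lemma below_subcode_eq: "below_subcode scale n E s = spans.below s"
  by (simp add: below_subcode_def)

context
  fixes Bs :: "spn \<Rightarrow> ('v, 'f) cyc set"
  assumes quotient_basis_Bs: "\<And>s. valid_span n s \<Longrightarrow>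
    quotient_basis (cscale scale) (below_subcode scale n E s) (span_subcode n E s) (Bs s)"
begin

lemma quotient_bases_disjoint: "valid_span n s \<Longrightarrow> valid_span n s' \<Longrightarrow> s \<noteq> s' \<Longrightarrow> Bs s \<inter> Bs s' = {}"
  using spans.B_disjoint[of Bs] quotient_basis_Bs by (simp add: below_subcode_eq)

lemma product_basis_union_quotient_bases: "product_basis scale n E (\<Union>{Bs s |s. valid_span n s})"
proof -
  let ?B = "\<Union>{Bs s |s. valid_span n s}"
  have qb: "\<And>s. s \<in> {s. valid_span n s} \<Longrightarrow>
      quotient_basis (cscale scale) (spans.below s) (span_subcode n E s) (Bs s)"
    using quotient_basis_Bs by (simp add: below_subcode_eq)
  have B: "?B = \<Union>(Bs ` {s. valid_span n s})" by blast
  have span_inter: "C.span (?B \<inter> span_subcode n E s) = span_subcode n E s" if "valid_span n s" for s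
    using spans.span_B_inter_S[OF qb] that unfolding B by simp
  have full: "span_subcode n E SFull = cycles n E"
    by (simp add: span_subcode_def has_span_def)
  have "C.span ?B = cycles n E"
  proof
    have "?B \<subseteq> cycles n E" using spans.B_subset[OF qb] by (auto simp: span_subcode_def)
    then show "C.span ?B \<subseteq> cycles n E" using C.span_minimal subspace_cycles by blast
    show "cycles n E \<subseteq> C.span ?B"
      using span_inter[of SFull] full C.span_mono[of "?B \<inter> cycles n E" ?B] by (simp add: valid_span_def)
  qed
  moreover have "C.independent ?B" using spans.independent_B[OF qb] unfolding B .
  ultimately show ?thesis using span_inter by (simp add: product_basis_def is_basis_def)
qed

end

end

theorem mainTheorem2:
  fixes scale :: "'f::{field,finite} \<Rightarrow> 'v::ab_group_add \<Rightarrow> 'v"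
    and n :: nat
    and V :: "nat \<Rightarrow> 'v set"
    and E :: "nat \<Rightarrow> ('v \<times> 'f \<times> 'v) set"
    and Bs :: "spn \<Rightarrow> ('v, 'f) cyc set"
  assumes lin: "linear_trellis scale n V E"
    and red: "reduced n E"
    and choice: "\<forall>s. valid_span n s \<longrightarrow>
       quotient_basis (cscale scale) (below_subcode scale n E s) (span_subcode n E s) (Bs s)"
  shows "(\<forall>s s'. valid_span n s \<and> valid_span n s' \<and> s \<noteq> s' \<longrightarrow> Bs s \<inter> Bs s' = {})
    \<and> is_basis (cscale scale) (\<Union>{Bs s | s. valid_span n s}) (cycles n E)
    \<and> (\<forall>s. valid_span n s \<longrightarrow>
          module.span (cscale scale) ((\<Union>{Bs s | s. valid_span n s}) \<inter> span_subcode n E s)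
            = span_subcode n E s)
    \<and> (\<exists>B. product_basis scale n E B)"
proof -
  interpret trellis_code scale n E
    using lin unfolding linear_trellis_def trellis_def trellis_code_def trellis_code_axioms_def by auto
  have "product_basis scale n E (\<Union>{Bs s | s. valid_span n s})"
    using product_basis_union_quotient_bases choice by blast
  then show ?thesis
    using quotient_bases_disjoint[of Bs] choice unfolding product_basis_def by blast
qed

end
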